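(* Let $G=(V,E)$ be a connected graph, let $A\subseteq V$ be nonempty and let $U\subseteq V$. Then for every edge $\{u,v\}\in E$ with $u,v\in U$ there exists $a\in A$ with $u\in D_a$ and $v\in D_a$. In other words, $\bigcup_{a\in A}G[D_a]$ covers every edge of $G[U]$.
   Context: $\delta$ is the shortest-path metric of the unweighted graph $G$. For $S\subseteq V$ and $v\in V$, $\delta(S,v)=\min_{s\in S}\delta(s,v)$. $N_2(a)=\{u\in V:\delta(u,a)\le 2\}$. For $w\in V$, $C_A(w)=\{v\in V:\delta(w,v)<\delta(A,v)\}$. For $a\in A$, the extended Voronoi cell is $D_a=\Big(\bigcup_{b\in N_2(a)}C_A(b)\,\cup\,N_2(a)\Big)\cap U$. *)

theory Defs
  imports Main
begin

definition graph :: "'a set \<Rightarrow> ('a \<Rightarrow> 'a \<Rightarrow> bool) \<Rightarrow> bool" where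
  "graph V E \<longleftrightarrow> finite V \<and> (\<forall>u v. E u v \<longrightarrow> u \<in> V \<and> v \<in> V)
      \<and> (\<forall>u v. E u v \<longrightarrow> E v u) \<and> (\<forall>v. \<not> E v v)"

definition connected :: "'a set \<Rightarrow> ('a \<Rightarrow> 'a \<Rightarrow> bool) \<Rightarrow> bool" where
  "connected V E \<longleftrightarrow> (\<forall>u\<in>V. \<forall>v\<in>V. \<exists>n. (E ^^ n) u v)"

definition gdist :: "('a \<Rightarrow> 'a \<Rightarrow> bool) \<Rightarrow> 'a \<Rightarrow> 'a \<Rightarrow> nat" where
  "gdist E u v = (LEAST n. (E ^^ n) u v)"

definition setdist :: "('a \<Rightarrow> 'a \<Rightarrow> bool) \<Rightarrow> 'a set \<Rightarrow> 'a \<Rightarrow> nat" where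
  "setdist E S v = (INF s\<in>S. gdist E s v)"

definition N2 :: "'a set \<Rightarrow> ('a \<Rightarrow> 'a \<Rightarrow> bool) \<Rightarrow> 'a \<Rightarrow> 'a set" where
  "N2 V E a = {u\<in>V. gdist E u a \<le> 2}"

definition CA :: "'a set \<Rightarrow> ('a \<Rightarrow> 'a \<Rightarrow> bool) \<Rightarrow> 'a set \<Rightarrow> 'a \<Rightarrow> 'a set" where
  "CA V E A w = {v\<in>V. gdist E w v < setdist E A v}"

definition Dcell :: "'a set \<Rightarrow> ('a \<Rightarrow> 'a \<Rightarrow> bool) \<Rightarrow> 'a set \<Rightarrow> 'a set \<Rightarrow> 'a \<Rightarrow> 'a set" where
  "Dcell V E A U a = ((\<Union>b\<in>N2 V E a. CA V E A b) \<union> N2 V E a) \<inter> U"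

end

theory Submission
  imports Defs
begin

text \<open>Let \<open>a\<close> be a source nearest to the endpoint \<open>u\<close> of the edge \<open>uv\<close>
  (with \<open>\<delta>(A,u) \<le> \<delta>(A,v)\<close>), at distance \<open>k\<close>. If \<open>k \<le> 1\<close>, both endpoints lie in
  \<open>N\<^sub>2(a)\<close>. Otherwise let \<open>b\<close> be the vertex at distance 2 from \<open>a\<close> on a shortest
  path from \<open>a\<close> to \<open>u\<close>: then \<open>\<delta>(b,u) = k - 2\<close> and \<open>\<delta>(b,v) \<le> k - 1\<close> are both below
  \<open>k \<le> \<delta>(A,u) \<le> \<delta>(A,v)\<close>, so \<open>u, v \<in> C\<^sub>A(b)\<close> with \<open>b \<in> N\<^sub>2(a)\<close>.\<close>

lemma relpowp_sym:
  assumes sym: "\<And>x y. E x y \<Longrightarrow> E y x"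
  shows "(E ^^ n) x y \<Longrightarrow> (E ^^ n) y x"
proof (induction n arbitrary: x y)
  case 0
  then show ?case by simp
next
  case (Suc n)
  then obtain z where "(E ^^ n) x z" "E z y" by (blast elim: relpowp_Suc_E)
  then show ?case using Suc.IH sym by (meson relpowp_Suc_I2)
qed

lemma relpowp_split:
  assumes "(E ^^ n) x y" and "m \<le> n"
  shows "\<exists>z. (E ^^ m) x z \<and> (E ^^ (n - m)) z y"
proof -
  have "(E ^^ (m + (n - m))) x y" using assms by simp
  then show ?thesis unfolding relpowp_add by blast
qed

lemma graph_relpowp_Suc_in_V:
  assumes "graph V E" and "(E ^^ Suc n) x y"
  shows "y \<in> V"
  using assms by (auto elim: relpowp_Suc_E simp: graph_def)

lemma gdist_le: "(E ^^ n) x y \<Longrightarrow> gdist E x y \<le> n"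
  unfolding gdist_def by (rule Least_le)

lemma gdist_relpowp: "(E ^^ n) x y \<Longrightarrow> (E ^^ gdist E x y) x y"
  unfolding gdist_def by (rule LeastI)

lemma setdist_le: "s \<in> S \<Longrightarrow> setdist E S v \<le> gdist E s v"
  unfolding setdist_def by (rule cINF_lower) auto

lemma setdist_attained:
  assumes "S \<noteq> {}"
  obtains s where "s \<in> S" and "gdist E s v = setdist E S v"
proof -
  have "setdist E S v \<in> (\<lambda>s. gdist E s v) ` S"
    unfolding setdist_def using assms by (intro Inf_nat_def1) auto
  then show ?thesis using that by auto
qed

lemma N2_I:
  assumes "(E ^^ n) x a" and "n \<le> 2" and "x \<in> V"
  shows "x \<in> N2 V E a"
  using gdist_le[OF assms(1)] assms(2,3) unfolding N2_def by simp

lemma CA_I: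
  assumes "(E ^^ n) b x" and "n < setdist E A x" and "x \<in> V"
  shows "x \<in> CA V E A b"
  using gdist_le[OF assms(1)] assms(2,3) unfolding CA_def by simp

lemma Dcell_cover_edge_ordered:
  assumes g: "graph V E" and c: "connected V E"
    and "A \<subseteq> V" and "A \<noteq> {}" and "U \<subseteq> V"
    and e: "E u v" and "u \<in> U" and "v \<in> U"
    and closer: "setdist E A u \<le> setdist E A v"
  shows "\<exists>a\<in>A. u \<in> Dcell V E A U a \<and> v \<in> Dcell V E A U a"
proof -
  have sym: "\<And>x y. E x y \<Longrightarrow> E y x" using g unfolding graph_def by blast
  have uV: "u \<in> V" and vV: "v \<in> V" using assms by auto
  obtain a where aA: "a \<in> A" and nearest: "gdist E a u = setdist E A u"
    using setdist_attained[OF \<open>A \<noteq> {}\<close>] by blast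
  define k where "k = setdist E A u"
  have "\<exists>n. (E ^^ n) a u" using c aA \<open>A \<subseteq> V\<close> uV unfolding connected_def by blast
  then have walk: "(E ^^ k) a u" using gdist_relpowp nearest k_def by metis
  have "u \<in> N2 V E a \<and> v \<in> N2 V E a \<or> (\<exists>b\<in>N2 V E a. u \<in> CA V E A b \<and> v \<in> CA V E A b)"
  proof (cases "k \<le> 1")
    case True
    have ua: "(E ^^ k) u a" using relpowp_sym[OF sym walk] .
    have va: "(E ^^ Suc k) v a" using relpowp_Suc_I2[OF sym[OF e] ua] .
    have "v \<in> N2 V E a" using N2_I[OF va] True vV by simp
    moreover have "u \<in> N2 V E a" using N2_I[OF ua] True uV by simp
    ultimately show ?thesis by blast
  next
    case False
    then obtain b where ab: "(E ^^ 2) a b" and bu: "(E ^^ (k - 2)) b u"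
      using relpowp_split[OF walk, of 2] by auto
    have "(E ^^ Suc 1) a b" using ab by (simp add: numeral_2_eq_2)
    then have "b \<in> V" by (rule graph_relpowp_Suc_in_V[OF g])
    then have "b \<in> N2 V E a" using N2_I[OF relpowp_sym[OF sym ab]] by simp
    moreover have "u \<in> CA V E A b" using CA_I[OF bu] False k_def uV by simp
    moreover have "v \<in> CA V E A b"
      using CA_I[OF relpowp_Suc_I[OF bu e]] False closer k_def vV by simp
    ultimately show ?thesis by blast
  qed
  then show ?thesis using aA \<open>u \<in> U\<close> \<open>v \<in> U\<close> unfolding Dcell_def by blast
qed

theorem lemma6:
  fixes V A U :: "'a set" and E :: "'a \<Rightarrow> 'a \<Rightarrow> bool"
  assumes "graph V E" and "connected V E"
    and "A \<subseteq> V" and "A \<noteq> {}" and "U \<subseteq> V"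
  shows "\<forall>u v. E u v \<and> u \<in> U \<and> v \<in> U \<longrightarrow>
           (\<exists>a\<in>A. u \<in> Dcell V E A U a \<and> v \<in> Dcell V E A U a)"
proof (intro allI impI)
  fix u v assume edge: "E u v \<and> u \<in> U \<and> v \<in> U"
  then have "E v u" using assms(1) unfolding graph_def by blast
  then show "\<exists>a\<in>A. u \<in> Dcell V E A U a \<and> v \<in> Dcell V E A U a"
  proof (cases "setdist E A u \<le> setdist E A v")
    case True
    then show ?thesis using Dcell_cover_edge_ordered[OF assms] edge by blast
  next
    case False
    then show ?thesis using Dcell_cover_edge_ordered[OF assms \<open>E v u\<close>] edge by auto
  qed
qed

end
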